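(* Let $X,Y$ be real Banach spaces. Assume that $X^*$ has octahedral norm and that there exists $f\in S_Y$ such that $n(Y,f)=1$. Let $H$ be a closed subspace of $L(X,Y)$ such that $X^*\otimes Y\subseteq H$. Then $H$ has octahedral norm.
   Context: The norm of a Banach space $Z$ is octahedral if for every finite-dimensional subspace $E$ of $Z$ and every $\varepsilon>0$ there is $y\in S_Z$ with $\|x+\lambda y\|\ge(1-\varepsilon)(\|x\|+|\lambda|)$ for all $x\in E$ and scalars $\lambda$. For a Banach space $Z$ and $u\in S_Z$, let $D(Z,u)=\{\varphi\in B_{Z^*}:\varphi(u)=1\}$ and let $n(Z,u)$ be the largest $k\ge0$ such that $k\|z\|\le\sup\{|\varphi(z)|:\varphi\in D(Z,u)\}$ for all $z\in Z$. $L(X,Y)$ is the space of bounded linear operators with operator norm; $X^*\otimes Y$ is the space of finite-rank operators spanned by $x\mapsto x^*(x)y$. *)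

theory Defs
  imports "HOL-Analysis.Analysis"
begin

definition octahedral :: "'a::real_normed_vector set \<Rightarrow> bool" where
  "octahedral Z \<longleftrightarrow>
     (\<forall>E \<epsilon>. subspace E \<and> E \<subseteq> Z \<and> (\<exists>B. finite B \<and> E = span B) \<and> \<epsilon> > 0 \<longrightarrow>
        (\<exists>y\<in>Z. norm y = 1 \<and>
           (\<forall>x\<in>E. \<forall>t::real. norm (x + t *\<^sub>R y) \<ge> (1 - \<epsilon>) * (norm x + \<bar>t\<bar>))))"

definition supp_functionals :: "'b::real_normed_vector \<Rightarrow> ('b \<Rightarrow>\<^sub>L real) set" where
  "supp_functionals u = {\<phi>. norm \<phi> \<le> 1 \<and> blinfun_apply \<phi> u = 1}"

definition numidx :: "'b::real_normed_vector \<Rightarrow> real" where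
  "numidx u = Sup {k. k \<ge> 0 \<and>
      (\<forall>z. k * norm z \<le> Sup ((\<lambda>\<phi>. \<bar>blinfun_apply \<phi> z\<bar>) ` supp_functionals u))}"

definition rank_one :: "('a::real_normed_vector \<Rightarrow>\<^sub>L real) \<Rightarrow> 'b::real_normed_vector \<Rightarrow> 'a \<Rightarrow>\<^sub>L 'b" where
  "rank_one xs y = blinfun_scaleR_left y o\<^sub>L xs"

end

theory Submission
  imports Defs
begin

(* Let D = D(Y,f).  Since n(Y,f) = 1, for every non-zero operator T and 0 < c < 1 some phi in D
   satisfies c^2 |T| < |phi o T|: almost attain |T| at some x, then almost norm T x by some phi
   in D (norming_composition).  This condition is open in T and invariant under positive
   rescaling of T, so compactness of a section of the cone span B - {0} (compact_cone_section,
   finite_subcover_cone) yields a finite set Phi of such functionals serving every T in a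
   finite-dimensional subspace E = span B of H (finite_norming_set).  Octahedrality of X*
   applied to span {phi o b | phi in Phi, b in B} gives y* in S_{X*}; the rank-one operator
   y = y* (.) f lies in H, has norm one and satisfies phi o y = y* for every phi in D, whence
   |T + t y| >= |phi o T + t y*| >= c (|phi o T| + |t|) >= c (c^2 |T| + |t|)
   (rank_one_l1_estimate).  Choosing c with c^3 >= 1 - eps gives the theorem. *)

section \<open>Compactness in finite-dimensional spans\<close>

lemma compact_coordinate_box:
  fixes B :: "'v::real_normed_vector set" and S :: "'v \<Rightarrow> real set"
  assumes "finite B" "\<And>b. b \<in> B \<Longrightarrow> compact (S b)"
  shows "compact {(\<Sum>b\<in>B. c b *\<^sub>R b) | c. \<forall>b\<in>B. c b \<in> S b}"
  using assms
proof (induction B rule: finite_induct)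
  case empty
  have "{(\<Sum>b\<in>{}. c b *\<^sub>R b) | c. \<forall>b\<in>({}::'v set). c b \<in> S b} = {0::'v}" by auto
  then show ?case by simp
next
  case (insert a B)
  let ?K = "{(\<Sum>b\<in>B. c b *\<^sub>R b) | c. \<forall>b\<in>B. c b \<in> S b}"
  have compact_K: "compact ?K" using insert by auto
  have compact_line: "compact ((\<lambda>t. t *\<^sub>R a) ` S a)"
    by (rule compact_continuous_image) (auto intro!: continuous_intros insert.prems)
  have "{(\<Sum>b\<in>insert a B. c b *\<^sub>R b) | c. \<forall>b\<in>insert a B. c b \<in> S b}
     = {x + y | x y. x \<in> (\<lambda>t. t *\<^sub>R a) ` S a \<and> y \<in> ?K}"
  proof (intro set_eqI iffI)
    fix z assume "z \<in> {(\<Sum>b\<in>insert a B. c b *\<^sub>R b) | c. \<forall>b\<in>insert a B. c b \<in> S b}"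
    then obtain c where "z = (\<Sum>b\<in>insert a B. c b *\<^sub>R b)" "\<forall>b\<in>insert a B. c b \<in> S b"
      by blast
    moreover have "(\<Sum>b\<in>insert a B. c b *\<^sub>R b) = c a *\<^sub>R a + (\<Sum>b\<in>B. c b *\<^sub>R b)"
      using insert.hyps by simp
    ultimately show "z \<in> {x + y | x y. x \<in> (\<lambda>t. t *\<^sub>R a) ` S a \<and> y \<in> ?K}" by blast
  next
    fix z assume "z \<in> {x + y | x y. x \<in> (\<lambda>t. t *\<^sub>R a) ` S a \<and> y \<in> ?K}"
    then obtain t c where z: "z = t *\<^sub>R a + (\<Sum>b\<in>B. c b *\<^sub>R b)"
      and t: "t \<in> S a" and c: "\<forall>b\<in>B. c b \<in> S b" by blast
    have "(\<Sum>b\<in>B. (c(a := t)) b *\<^sub>R b) = (\<Sum>b\<in>B. c b *\<^sub>R b)"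
      using insert.hyps by (intro sum.cong) auto
    then have "z = (\<Sum>b\<in>insert a B. (c(a := t)) b *\<^sub>R b)" using z insert.hyps by simp
    moreover have "\<forall>b\<in>insert a B. (c(a := t)) b \<in> S b" using t c by auto
    ultimately show "z \<in> {(\<Sum>b\<in>insert a B. c b *\<^sub>R b) | c. \<forall>b\<in>insert a B. c b \<in> S b}"
      by blast
  qed
  then show ?case using compact_sums[OF compact_line compact_K] by simp
qed

text \<open>The cone of non-zero vectors of a finite-dimensional span has a compact section avoiding
  zero: coefficients (w.r.t. a basis) bounded by 1 in modulus, one of them equal to \<open>\<plusminus>1\<close>.\<close>
lemma compact_cone_section:
  fixes B :: "'v::real_normed_vector set"
  assumes "finite B"
  shows "\<exists>K. compact K \<and> K \<subseteq> span B \<and> 0 \<notin> K \<and>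
           (\<forall>T\<in>span B. T \<noteq> 0 \<longrightarrow> (\<exists>c>0. c *\<^sub>R T \<in> K))"
proof -
  obtain B' where B': "B' \<subseteq> B" "independent B'" "B \<subseteq> span B'"
    using maximal_independent_subset by blast
  have fin: "finite B'" using B'(1) assms finite_subset by blast
  define S where "S = (\<lambda>(b0::'v) (s::real) (b::'v). if b = b0 then {s} else {-1..1::real})"
  define K where "K = (\<Union>b0\<in>B'. \<Union>s\<in>{1,-1}. {(\<Sum>b\<in>B'. c b *\<^sub>R b) | c. \<forall>b\<in>B'. c b \<in> S b0 s b})"
  have "compact K" unfolding K_def
    by (intro compact_UN finite.intros fin ballI compact_coordinate_box) (auto simp: S_def)
  moreover have "K \<subseteq> span B"
  proof -
    have "K \<subseteq> span B'" unfolding K_def span_finite[OF fin] by blast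
    then show ?thesis using span_mono[OF B'(1)] by blast
  qed
  moreover have "T \<noteq> 0" if "T \<in> K" for T
  proof
    assume "T = 0"
    from \<open>T \<in> K\<close> obtain b0 s c where b0: "b0 \<in> B'" and s: "s \<in> {1,-1}"
      and T: "T = (\<Sum>b\<in>B'. c b *\<^sub>R b)" and c: "\<forall>b\<in>B'. c b \<in> S b0 s b"
      unfolding K_def by blast
    have "c b0 = s" using bspec[OF c b0] by (simp add: S_def)
    then have "c b0 \<noteq> 0" using s by auto
    then have "dependent B'"
      using dependent_finite[OF fin] b0 T \<open>T = 0\<close> by blast
    then show False using B'(2) by blast
  qed
  moreover have "\<exists>c>0. c *\<^sub>R T \<in> K" if T: "T \<in> span B" "T \<noteq> 0" for T
  proof -
    have "T \<in> span B'" using T(1) B'(3) span_mono span_span by blast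
    then obtain c where Tc: "T = (\<Sum>b\<in>B'. c b *\<^sub>R b)" using span_finite[OF fin] by blast
    have "B' \<noteq> {}" using Tc T(2) by auto
    define M where "M = Max ((\<lambda>b. \<bar>c b\<bar>) ` B')"
    have "M \<in> (\<lambda>b. \<bar>c b\<bar>) ` B'"
      unfolding M_def using fin \<open>B' \<noteq> {}\<close> by (intro Max_in) auto
    then obtain b0 where b0: "b0 \<in> B'" "\<bar>c b0\<bar> = M" by auto
    have bounded: "\<bar>c b\<bar> \<le> M" if "b \<in> B'" for b
      unfolding M_def using fin that by (intro Max_ge) auto
    have "M > 0"
    proof (rule ccontr)
      assume "\<not> M > 0"
      then have "\<forall>b\<in>B'. c b = 0" using bounded by (meson abs_le_zero_iff not_le order_trans)
      then show False using Tc T(2) by simp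
    qed
    define c' where "c' = (\<lambda>b. c b / M)"
    have "(1/M) *\<^sub>R T = (\<Sum>b\<in>B'. c' b *\<^sub>R b)"
      unfolding Tc c'_def by (simp add: scaleR_sum_right divide_inverse_commute)
    moreover have "\<forall>b\<in>B'. c' b \<in> S b0 (c' b0) b"
    proof -
      have "\<bar>c' b\<bar> \<le> 1" if "b \<in> B'" for b
        using bounded[OF that] \<open>M > 0\<close> by (simp add: c'_def abs_divide)
      then show ?thesis by (auto simp: S_def abs_le_iff)
    qed
    moreover have "c' b0 \<in> {1,-1}" using b0 \<open>M > 0\<close> by (auto simp: c'_def abs_if split: if_splits)
    ultimately have "(1/M) *\<^sub>R T \<in> K" unfolding K_def using b0(1) by blast
    then show ?thesis using \<open>M > 0\<close> by (intro exI[of _ "1/M"]) auto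
  qed
  ultimately show ?thesis by (intro exI[of _ K]) blast
qed

lemma finite_subcover_cone:
  fixes B :: "'v::real_normed_vector set" and U :: "'p \<Rightarrow> 'v set"
  assumes "finite B"
    and open_U: "\<And>\<phi>. \<phi> \<in> D \<Longrightarrow> open (U \<phi>)"
    and cone_U: "\<And>\<phi> T c. \<phi> \<in> D \<Longrightarrow> c > 0 \<Longrightarrow> c *\<^sub>R T \<in> U \<phi> \<Longrightarrow> T \<in> U \<phi>"
    and cover: "\<And>T. T \<in> span B \<Longrightarrow> T \<noteq> 0 \<Longrightarrow> \<exists>\<phi>\<in>D. T \<in> U \<phi>"
  shows "\<exists>\<Phi>\<subseteq>D. finite \<Phi> \<and> (\<forall>T\<in>span B. T \<noteq> 0 \<longrightarrow> (\<exists>\<phi>\<in>\<Phi>. T \<in> U \<phi>))"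
proof -
  obtain K where K: "compact K" "K \<subseteq> span B" "0 \<notin> K"
    "\<forall>T\<in>span B. T \<noteq> 0 \<longrightarrow> (\<exists>c>0. c *\<^sub>R T \<in> K)"
    using compact_cone_section[OF \<open>finite B\<close>] by blast
  have "K \<subseteq> (\<Union>\<phi>\<in>D. U \<phi>)"
  proof
    fix T assume "T \<in> K"
    then have "T \<in> span B" "T \<noteq> 0" using K(2,3) by auto
    then show "T \<in> (\<Union>\<phi>\<in>D. U \<phi>)" using cover by blast
  qed
  then obtain \<Phi> where \<Phi>: "\<Phi> \<subseteq> D" "finite \<Phi>" "K \<subseteq> (\<Union>\<phi>\<in>\<Phi>. U \<phi>)"
    using compactE_image[of K D U, OF K(1) open_U] by blast
  have "\<exists>\<phi>\<in>\<Phi>. T \<in> U \<phi>" if "T \<in> span B" "T \<noteq> 0" for T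
  proof -
    have "\<exists>c>0. c *\<^sub>R T \<in> K" using K(4) that by simp
    then obtain c where "c > 0" "c *\<^sub>R T \<in> K" by blast
    then have "c *\<^sub>R T \<in> (\<Union>\<phi>\<in>\<Phi>. U \<phi>)" using \<Phi>(3) by blast
    then obtain \<phi> where "\<phi> \<in> \<Phi>" "c *\<^sub>R T \<in> U \<phi>" by blast
    then show ?thesis using cone_U[of \<phi> c T] \<Phi>(1) \<open>c > 0\<close> by blast
  qed
  then show ?thesis using \<Phi>(1,2) by blast
qed


section \<open>Consequences of a large numerical index\<close>

lemmas blinfun_compose_add_right = bounded_bilinear.add_right[OF bounded_bilinear_blinfun_compose]
lemmas blinfun_compose_scaleR_right = bounded_bilinear.scaleR_right[OF bounded_bilinear_blinfun_compose]

lemma supp_functionals_le_norm: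
  assumes "\<phi> \<in> supp_functionals u"
  shows "\<bar>blinfun_apply \<phi> z\<bar> \<le> norm z"
proof -
  have "\<bar>blinfun_apply \<phi> z\<bar> \<le> norm \<phi> * norm z" using norm_blinfun[of \<phi> z] by simp
  also have "\<dots> \<le> norm z"
    using assms by (intro mult_left_le_one_le) (auto simp: supp_functionals_def)
  finally show ?thesis .
qed

text \<open>Without supporting functionals at a non-zero point the numerical index is not positive
  (the supremum over the empty family is a constant, which no positive multiple of the norm
  stays below).\<close>
lemma supp_functionals_nonempty:
  fixes u :: "'b::real_normed_vector"
  assumes "u \<noteq> 0" and "numidx u > 0"
  shows "supp_functionals u \<noteq> {}"
proof
  assume empty: "supp_functionals u = {}"
  define c where "c = Sup ({} :: real set)"
  define S where "S = {k::real. k \<ge> 0 \<and> (\<forall>z::'b. k * norm z \<le> c)}"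
  have numidx_eq: "numidx u = Sup S"
    unfolding numidx_def S_def c_def empty by simp
  have nonpos: "k \<le> 0" if "k \<in> S" for k
  proof (rule ccontr)
    assume "\<not> k \<le> 0"
    define z where "z = ((\<bar>c\<bar> + 1) / (k * norm u)) *\<^sub>R u"
    have "k * norm z = \<bar>c\<bar> + 1"
      using \<open>\<not> k \<le> 0\<close> assms(1) by (simp add: z_def field_simps)
    moreover have "k * norm z \<le> c" using that unfolding S_def by blast
    ultimately show False by linarith
  qed
  have "Sup S \<le> 0"
  proof (cases "0 \<le> c")
    case True
    have "S = {0}"
    proof
      show "S \<subseteq> {0}" using nonpos by (force simp: S_def)
      show "{0} \<subseteq> S" using True by (simp add: S_def)
    qed
    then show ?thesis by simp
  next
    case False
    have "S = {}"
    proof (rule equals0I)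
      fix k assume "k \<in> S"
      then have "k * norm (0::'b) \<le> c" unfolding S_def by blast
      then show False using False by simp
    qed
    then show ?thesis using False by (simp add: c_def)
  qed
  then show False using assms(2) numidx_eq by simp
qed

lemma numidx_approx:
  assumes nonempty: "supp_functionals u \<noteq> {}" and "z \<noteq> 0" and "k < numidx u"
  shows "\<exists>\<phi>\<in>supp_functionals u. k * norm z < \<bar>blinfun_apply \<phi> z\<bar>"
proof (rule ccontr)
  assume none: "\<not> ?thesis"
  define M where "M = (\<lambda>z. Sup ((\<lambda>\<phi>. \<bar>blinfun_apply \<phi> z\<bar>) ` supp_functionals u))"
  define S where "S = {k. k \<ge> 0 \<and> (\<forall>z. k * norm z \<le> M z)}"
  have bdd: "bdd_above ((\<lambda>\<phi>. \<bar>blinfun_apply \<phi> z'\<bar>) ` supp_functionals u)" for z'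
    using supp_functionals_le_norm by (intro bdd_aboveI2) blast
  obtain \<phi>0 where \<phi>0: "\<phi>0 \<in> supp_functionals u" using nonempty by blast
  have "M z' \<ge> 0" for z'
    unfolding M_def using cSup_upper[OF imageI[OF \<phi>0] bdd[of z']] by (meson abs_ge_zero order_trans)
  then have "0 \<in> S" unfolding S_def by simp
  have Mz: "M z \<le> k * norm z"
    unfolding M_def using none nonempty by (auto intro!: cSup_least simp: not_less)
  have "k' \<le> k" if "k' \<in> S" for k'
  proof -
    have "k' * norm z \<le> M z" using that unfolding S_def by blast
    then have "k' * norm z \<le> k * norm z" using Mz by linarith
    then show ?thesis using \<open>z \<noteq> 0\<close> by simp
  qed
  then have "Sup S \<le> k" using \<open>0 \<in> S\<close> by (intro cSup_least) auto
  then show False using \<open>k < numidx u\<close> unfolding numidx_def S_def M_def by simp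
qed

lemma blinfun_norm_approx:
  fixes T :: "'a::real_normed_vector \<Rightarrow>\<^sub>L 'b::real_normed_vector"
  assumes "0 \<le> a" and "a < norm T"
  shows "\<exists>x. a * norm x < norm (blinfun_apply T x)"
proof (rule ccontr)
  assume "\<not> ?thesis"
  then have "norm T \<le> a" using assms(1) by (intro norm_blinfun_bound) (auto simp: not_less)
  then show False using assms(2) by simp
qed

text \<open>Composition with a suitable supporting functional almost preserves the norm of an
  operator: first almost attain the norm of T at x, then almost norm T x by some phi.\<close>
lemma norming_composition:
  fixes T :: "'a::real_normed_vector \<Rightarrow>\<^sub>L 'b::real_normed_vector"
  assumes nonempty: "supp_functionals u \<noteq> {}" and "0 \<le> k" "k < numidx u"
    and "0 \<le> a" "a < norm T"
  shows "\<exists>\<phi>\<in>supp_functionals u. k * a < norm (\<phi> o\<^sub>L T)"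
proof -
  obtain x where x: "a * norm x < norm (blinfun_apply T x)"
    using blinfun_norm_approx[OF assms(4,5)] by blast
  moreover have "0 \<le> a * norm x" using assms(4) by simp
  ultimately have Tx0: "blinfun_apply T x \<noteq> 0" by auto
  then have x0: "x \<noteq> 0" by auto
  obtain \<phi> where \<phi>: "\<phi> \<in> supp_functionals u"
    and Tx: "k * norm (blinfun_apply T x) < \<bar>blinfun_apply \<phi> (blinfun_apply T x)\<bar>"
    using numidx_approx[OF nonempty Tx0 assms(3)] by blast
  have "k * a * norm x \<le> k * norm (blinfun_apply T x)"
    using x \<open>0 \<le> k\<close> by (simp add: mult.assoc mult_left_mono)
  also have "\<dots> < \<bar>blinfun_apply (\<phi> o\<^sub>L T) x\<bar>" using Tx by simp
  also have "\<dots> \<le> norm (\<phi> o\<^sub>L T) * norm x" using norm_blinfun[of "\<phi> o\<^sub>L T" x] by simp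
  finally have "k * a * norm x < norm (\<phi> o\<^sub>L T) * norm x" .
  then have "k * a < norm (\<phi> o\<^sub>L T)" using x0 by (simp add: mult_less_cancel_right)
  then show ?thesis using \<phi> by blast
qed

lemma finite_norming_set:
  fixes B :: "('a::real_normed_vector \<Rightarrow>\<^sub>L 'b::real_normed_vector) set"
  assumes "finite B" and "u \<noteq> 0" and "0 < c" "c < 1" "c < numidx u"
  shows "\<exists>\<Phi>\<subseteq>supp_functionals u. finite \<Phi> \<and>
           (\<forall>T\<in>span B. \<exists>\<phi>\<in>\<Phi>. c\<^sup>2 * norm T \<le> norm (\<phi> o\<^sub>L T))"
proof -
  let ?D = "supp_functionals u"
  define U :: "('b \<Rightarrow>\<^sub>L real) \<Rightarrow> ('a \<Rightarrow>\<^sub>L 'b) set"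
    where "U = (\<lambda>\<phi>. {T. c\<^sup>2 * norm T < norm (\<phi> o\<^sub>L T)})"
  have nonempty: "?D \<noteq> {}" using supp_functionals_nonempty assms(2,3,5) by force
  then obtain \<phi>0 where \<phi>0: "\<phi>0 \<in> ?D" by blast
  have "\<exists>\<Phi>\<subseteq>?D. finite \<Phi> \<and> (\<forall>T\<in>span B. T \<noteq> 0 \<longrightarrow> (\<exists>\<phi>\<in>\<Phi>. T \<in> U \<phi>))"
  proof (rule finite_subcover_cone[of B ?D U, OF assms(1)])
    show "open (U \<phi>)" for \<phi>
      unfolding U_def by (intro open_Collect_less continuous_intros)
    show "T \<in> U \<phi>" if "a > 0" "a *\<^sub>R T \<in> U \<phi>" for \<phi> T and a :: real
      using that by (simp add: U_def blinfun_compose_scaleR_right)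
    show "\<exists>\<phi>\<in>?D. T \<in> U \<phi>" if "T \<noteq> 0" for T
    proof -
      have "c * norm T < norm T" using that assms(4) by simp
      then have "\<exists>\<phi>\<in>?D. c * (c * norm T) < norm (\<phi> o\<^sub>L T)"
        using assms(3) by (intro norming_composition[OF nonempty _ assms(5)]) simp_all
      then show ?thesis by (simp add: U_def power2_eq_square mult.assoc)
    qed
  qed
  then obtain \<Phi> where \<Phi>: "\<Phi> \<subseteq> ?D" "finite \<Phi>" "\<forall>T\<in>span B. T \<noteq> 0 \<longrightarrow> (\<exists>\<phi>\<in>\<Phi>. T \<in> U \<phi>)"
    by blast
  have "\<exists>\<phi>\<in>insert \<phi>0 \<Phi>. c\<^sup>2 * norm T \<le> norm (\<phi> o\<^sub>L T)" if "T \<in> span B" for T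
  proof (cases "T = 0")
    case True
    then show ?thesis by (intro bexI[of _ \<phi>0]) simp_all
  next
    case False
    then obtain \<phi> where "\<phi> \<in> \<Phi>" "T \<in> U \<phi>" using \<Phi>(3) \<open>T \<in> span B\<close> by blast
    then show ?thesis by (intro bexI[of _ \<phi>]) (auto simp: U_def)
  qed
  then show ?thesis using \<Phi>(1,2) \<phi>0 by (intro exI[of _ "insert \<phi>0 \<Phi>"]) simp
qed


section \<open>Rank-one operators built from a supported vector\<close>

lemma rank_one_apply [simp]: "blinfun_apply (rank_one xs y) x = blinfun_apply xs x *\<^sub>R y"
  by (simp add: rank_one_def)

lemma norm_rank_one: "norm (rank_one xs y) = norm xs * norm y"
proof (rule antisym)
  show "norm (rank_one xs y) \<le> norm xs * norm y"
  proof (rule norm_blinfun_bound)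
    fix x
    have "norm (blinfun_apply xs x) * norm y \<le> norm xs * norm x * norm y"
      using norm_blinfun[of xs x] by (simp add: mult_right_mono)
    then show "norm (blinfun_apply (rank_one xs y) x) \<le> norm xs * norm y * norm x"
      by (simp add: mult_ac)
  qed simp
  show "norm xs * norm y \<le> norm (rank_one xs y)"
  proof (cases "y = 0")
    case False
    have "norm xs \<le> norm (rank_one xs y) / norm y"
    proof (rule norm_blinfun_bound)
      fix x
      have "norm (blinfun_apply xs x) * norm y \<le> norm (rank_one xs y) * norm x"
        using norm_blinfun[of "rank_one xs y" x] by simp
      then show "norm (blinfun_apply xs x) \<le> norm (rank_one xs y) / norm y * norm x"
        using False by (simp add: field_simps)
    qed simp
    then show ?thesis using False by (simp add: field_simps)
  qed simp
qed

lemma supp_compose_rank_one: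
  assumes "\<phi> \<in> supp_functionals u"
  shows "\<phi> o\<^sub>L rank_one xs u = xs"
  using assms by (intro blinfun_eqI) (simp add: blinfun.scaleR_right supp_functionals_def)

lemma supp_compose_le:
  assumes "\<phi> \<in> supp_functionals u"
  shows "norm (\<phi> o\<^sub>L T) \<le> norm T"
proof -
  have "norm (\<phi> o\<^sub>L T) \<le> norm \<phi> * norm T" by (rule norm_blinfun_compose)
  also have "\<dots> \<le> norm T"
    using assms by (intro mult_left_le_one_le) (auto simp: supp_functionals_def)
  finally show ?thesis .
qed

lemma compose_left_span:
  assumes "T \<in> span B"
  shows "\<phi> o\<^sub>L T \<in> span ((\<lambda>T. \<phi> o\<^sub>L T) ` B)"
proof -
  have "linear (\<lambda>T. \<phi> o\<^sub>L T)"
    by (rule bounded_linear.linear)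
      (rule bounded_bilinear.bounded_linear_right[OF bounded_bilinear_blinfun_compose])
  then show ?thesis using span_linear_image assms by blast
qed

lemma rank_one_l1_estimate:
  assumes \<phi>: "\<phi> \<in> supp_functionals u"
    and norming: "c\<^sup>2 * norm T \<le> norm (\<phi> o\<^sub>L T)"
    and orth: "c * (norm (\<phi> o\<^sub>L T) + \<bar>t\<bar>) \<le> norm ((\<phi> o\<^sub>L T) + t *\<^sub>R ys)"
    and "0 \<le> c" "c \<le> 1" "1 - \<epsilon> \<le> c ^ 3"
  shows "(1 - \<epsilon>) * (norm T + \<bar>t\<bar>) \<le> norm (T + t *\<^sub>R rank_one ys u)"
proof -
  have "c ^ 3 \<le> c" using power_decreasing[of 1 3 c] \<open>0 \<le> c\<close> \<open>c \<le> 1\<close> by simp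
  then have "(1 - \<epsilon>) * norm T + (1 - \<epsilon>) * \<bar>t\<bar> \<le> c ^ 3 * norm T + c * \<bar>t\<bar>"
    using \<open>1 - \<epsilon> \<le> c ^ 3\<close> by (intro add_mono mult_right_mono) simp_all
  then have "(1 - \<epsilon>) * (norm T + \<bar>t\<bar>) \<le> c * (c\<^sup>2 * norm T) + c * \<bar>t\<bar>"
    by (simp add: distrib_left power3_eq_cube power2_eq_square mult.assoc)
  also have "\<dots> \<le> c * (norm (\<phi> o\<^sub>L T) + \<bar>t\<bar>)"
    using norming \<open>0 \<le> c\<close> by (simp add: distrib_left mult_left_mono)
  also have "\<dots> \<le> norm (\<phi> o\<^sub>L (T + t *\<^sub>R rank_one ys u))"
    using orth
    by (simp add: blinfun_compose_add_right blinfun_compose_scaleR_right supp_compose_rank_one[OF \<phi>])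
  also have "\<dots> \<le> norm (T + t *\<^sub>R rank_one ys u)" by (rule supp_compose_le[OF \<phi>])
  finally show ?thesis .
qed


section \<open>Octahedrality passes from \<open>X*\<close> to spaces of operators\<close>

lemma octahedral_UNIV_span:
  assumes "octahedral (UNIV :: 'a::real_normed_vector set)" and "finite G" and "\<delta> > 0"
  shows "\<exists>y::'a. norm y = 1 \<and> (\<forall>x\<in>span G. \<forall>t. (1 - \<delta>) * (norm x + \<bar>t\<bar>) \<le> norm (x + t *\<^sub>R y))"
  using assms unfolding octahedral_def by (metis subspace_span top_greatest)

text \<open>The loss \<open>\<epsilon>\<close> allowed in the conclusion can be split as \<open>c\<^sup>3\<close>: one factor c is
  lost by octahedrality of \<open>X*\<close>, two by the norming functionals.\<close>
lemma cube_margin: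
  assumes "\<epsilon> > 0"
  shows "\<exists>c::real. 0 < c \<and> c < 1 \<and> 1 - \<epsilon> \<le> c ^ 3"
proof -
  define c where "c = 1 - min (\<epsilon> / 3) (1 / 2)"
  have c: "0 < c" "c < 1" using assms by (auto simp: c_def)
  have "1 + 3 * (c - 1) \<le> c ^ 3" using Bernoulli_inequality[of "c - 1" 3] c by simp
  moreover have "3 * (1 - c) \<le> \<epsilon>" by (simp add: c_def)
  ultimately show ?thesis using c by (intro exI[of _ c]) simp
qed

text \<open>Main theorem.\<close>
theorem mainTheorem5:
  fixes H :: "('a::banach \<Rightarrow>\<^sub>L 'b::banach) set"
    and f :: 'b
  assumes "octahedral (UNIV :: ('a \<Rightarrow>\<^sub>L real) set)"
    and "norm f = 1"
    and "numidx f = 1"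
    and "subspace H" and "closed H"
    and "span {rank_one xs y | xs y. True} \<subseteq> H"
  shows "octahedral H"
  unfolding octahedral_def
proof (intro allI impI, elim conjE exE)
  fix E :: "('a \<Rightarrow>\<^sub>L 'b) set" and \<epsilon> :: real and B
  assume "E \<subseteq> H" "finite B" "E = span B" "\<epsilon> > 0"
  obtain c where c: "0 < c" "c < 1" "1 - \<epsilon> \<le> c ^ 3" using cube_margin[OF \<open>\<epsilon> > 0\<close>] by blast
  have "f \<noteq> 0" using assms(2) by auto
  obtain \<Phi> where \<Phi>: "\<Phi> \<subseteq> supp_functionals f" "finite \<Phi>"
    "\<forall>T\<in>span B. \<exists>\<phi>\<in>\<Phi>. c\<^sup>2 * norm T \<le> norm (\<phi> o\<^sub>L T)"
    using finite_norming_set[OF \<open>finite B\<close> \<open>f \<noteq> 0\<close> c(1,2)] assms(3) c by auto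
  define G where "G = (\<lambda>(\<phi>, T). \<phi> o\<^sub>L T) ` (\<Phi> \<times> B)"
  obtain ys where ys: "norm ys = 1"
    "\<forall>x\<in>span G. \<forall>t. c * (norm x + \<bar>t\<bar>) \<le> norm (x + t *\<^sub>R ys)"
    using octahedral_UNIV_span[OF assms(1), of G "1 - c"] \<Phi>(2) \<open>finite B\<close> c(2)
    by (auto simp: G_def)
  show "\<exists>y\<in>H. norm y = 1 \<and> (\<forall>x\<in>E. \<forall>t. (1 - \<epsilon>) * (norm x + \<bar>t\<bar>) \<le> norm (x + t *\<^sub>R y))"
  proof (intro bexI[of _ "rank_one ys f"] conjI ballI allI)
    show "rank_one ys f \<in> H" using assms(6) by (blast intro: span_base)
    show "norm (rank_one ys f) = 1" using ys(1) assms(2) by (simp add: norm_rank_one)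
    fix T t assume "T \<in> E"
    then obtain \<phi> where \<phi>: "\<phi> \<in> \<Phi>" "c\<^sup>2 * norm T \<le> norm (\<phi> o\<^sub>L T)"
      using \<Phi>(3) \<open>E = span B\<close> by blast
    have "(\<lambda>T. \<phi> o\<^sub>L T) ` B \<subseteq> G" using \<phi>(1) by (force simp: G_def)
    then have "\<phi> o\<^sub>L T \<in> span G"
      using compose_left_span[of T B \<phi>] \<open>T \<in> E\<close> \<open>E = span B\<close> span_mono by blast
    then show "(1 - \<epsilon>) * (norm T + \<bar>t\<bar>) \<le> norm (T + t *\<^sub>R rank_one ys f)"
      using rank_one_l1_estimate[OF _ \<phi>(2)] \<Phi>(1) \<phi>(1) ys(2) c by auto
  qed
qed

end
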